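(* Let $D_6=\langle\sigma,\tau\mid\sigma^6=\tau^2=1,\ \tau\sigma\tau^{-1}=\sigma^{-1}\rangle$ be the dihedral group of order $12$. Let $C_2^{(1)}=\langle\sigma^3\rangle$, $C_2^{(2)}=\langle\tau\rangle$, $C_2^{(3)}=\langle\sigma\tau\rangle$, $C_3=\langle\sigma^2\rangle$, $V_4=\langle\sigma^3,\tau\rangle$, $C_6=\langle\sigma\rangle$, $S_3^{(1)}=\langle\sigma^2,\tau\rangle$, $S_3^{(2)}=\langle\sigma^2,\sigma\tau\rangle$ (representatives of the conjugacy classes of nontrivial proper subgroups of $D_6$). Then there is an isomorphism of permutation $D_6$-lattices $\mathbb{Z}[D_6]\oplus\mathbb{Z}[D_6/V_4]^{\oplus2}\oplus\mathbb{Z}[D_6/C_6]\oplus\mathbb{Z}[D_6/S_3^{(1)}]\oplus\mathbb{Z}[D_6/S_3^{(2)}]\ \simeq\ \mathbb{Z}[D_6/C_2^{(1)}]\oplus\mathbb{Z}[D_6/C_2^{(2)}]\oplus\mathbb{Z}[D_6/C_2^{(3)}]\oplus\mathbb{Z}[D_6/C_3]\oplus\mathbb{Z}^{\oplus2}.$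
   Context: For a subgroup $H$ of a finite group $G$, $\mathbb{Z}[G/H]$ is the permutation $\mathbb{Z}[G]$-module with $\mathbb{Z}$-basis the left cosets $gH$, permuted by left multiplication; $\mathbb{Z}=\mathbb{Z}[G/G]$ is the trivial module. *)

theory Defs
  imports "HOL-Algebra.Algebra"
begin

text \<open>Elements are pairs (a, e) standing for sigma^a tau^e, with a in {0..5}, e a boolean.
  Multiplication: sigma^a tau^s * sigma^b tau^t = sigma^(a + (-1)^s b) tau^(s+t).\<close>

definition d6_mult :: "nat \<times> bool \<Rightarrow> nat \<times> bool \<Rightarrow> nat \<times> bool" where
  "d6_mult x y = (case x of (a, s) \<Rightarrow> case y of (b, t) \<Rightarrow>
      ((if s then a + 6 - b mod 6 else a + b) mod 6, s \<noteq> t))"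

definition D6 :: "(nat \<times> bool) monoid" where
  "D6 = \<lparr>carrier = {0..<6} \<times> UNIV, monoid.mult = d6_mult, one = (0, False)\<rparr>"

definition d6_sigma :: "nat \<times> bool" where "d6_sigma = (1, False)"
definition d6_tau :: "nat \<times> bool" where "d6_tau = (0, True)"

definition lcosets_set :: "('a, 'b) monoid_scheme \<Rightarrow> 'a set \<Rightarrow> 'a set set" where
  "lcosets_set G H = (\<lambda>g. l_coset G g H) ` carrier G"

definition perm_gset :: "('a, 'b) monoid_scheme \<Rightarrow> 'a set list \<Rightarrow> (nat \<times> 'a set) set" where
  "perm_gset G Hs = {(i, C). i < length Hs \<and> C \<in> lcosets_set G (Hs ! i)}"

text \<open>The free Z-module on this (finite) G-set: integer-valued functions supported on it;
  the basis element of a point x is the indicator of x.\<close>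
definition perm_lattice :: "('a, 'b) monoid_scheme \<Rightarrow> 'a set list \<Rightarrow> ((nat \<times> 'a set) \<Rightarrow> int) set" where
  "perm_lattice G Hs = {f. \<forall>x. x \<notin> perm_gset G Hs \<longrightarrow> f x = 0}"

text \<open>G acts by (g.f)(i, C) = f(i, g^-1 C), so that g sends the basis element of (i, C) to that of (i, gC).\<close>
definition perm_act :: "('a, 'b) monoid_scheme \<Rightarrow> 'a set list \<Rightarrow> 'a \<Rightarrow> ((nat \<times> 'a set) \<Rightarrow> int) \<Rightarrow> ((nat \<times> 'a set) \<Rightarrow> int)" where
  "perm_act G Hs g f = (\<lambda>(i, C). if (i, C) \<in> perm_gset G Hs then f (i, l_coset G (inv\<^bsub>G\<^esub> g) C) else 0)"

text \<open>Isomorphism of Z[G]-modules: additive (hence Z-linear) G-equivariant bijection.\<close>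
definition perm_lattice_iso :: "('a, 'b) monoid_scheme \<Rightarrow> 'a set list \<Rightarrow> 'a set list \<Rightarrow> bool" where
  "perm_lattice_iso G Hs Ks = (\<exists>\<phi>.
      bij_betw \<phi> (perm_lattice G Hs) (perm_lattice G Ks)
    \<and> (\<forall>f \<in> perm_lattice G Hs. \<forall>f' \<in> perm_lattice G Hs. \<phi> (\<lambda>x. f x + f' x) = (\<lambda>y. \<phi> f y + \<phi> f' y))
    \<and> (\<forall>g \<in> carrier G. \<forall>f \<in> perm_lattice G Hs. \<phi> (perm_act G Hs g f) = perm_act G Ks g (\<phi> f)))"

end

theory Submission
  imports Defs
begin

text \<open>Both sides are permutation lattices of rank 24. A \<open>\<int>[G]\<close>-isomorphism between them is an
  integer matrix, indexed by the two bases of cosets, that commutes with the permutation action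
  of \<open>G\<close> and is invertible over \<open>\<int>\<close>. Such a matrix was found by computer; together with its
  inverse it certifies the isomorphism, leaving finite checks: the matrix commutes with the
  action of the generators \<open>\<sigma>\<close> and \<open>\<tau>\<close> (hence with all of \<open>D\<^sub>6\<close>), and the two products with
  its inverse are identity matrices.\<close>

(* <# is also ASCII syntax for strict multiset inclusion; left cosets should parse unambiguously. *)
no_notation (ASCII) subset_mset (infix \<open><#\<close> 50)

section \<open>Integral kernels between permutation lattices\<close>

definition coset_act :: "('a, 'b) monoid_scheme \<Rightarrow> 'a \<Rightarrow> nat \<times> 'a set \<Rightarrow> nat \<times> 'a set" where
  "coset_act G g p = (fst p, g <#\<^bsub>G\<^esub> snd p)"

lemma perm_act_eq:
  "perm_act G Hs g f p = (if p \<in> perm_gset G Hs then f (coset_act G (inv\<^bsub>G\<^esub> g) p) else 0)"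
  by (cases p) (simp add: perm_act_def coset_act_def)

lemma perm_gsetE:
  assumes "p \<in> perm_gset G Hs"
  obtains i h where "p = (i, h <#\<^bsub>G\<^esub> Hs ! i)" "i < length Hs" "h \<in> carrier G"
  using assms unfolding perm_gset_def lcosets_set_def by auto

lemma perm_gsetI:
  "i < length Hs \<Longrightarrow> h \<in> carrier G \<Longrightarrow> (i, h <#\<^bsub>G\<^esub> Hs ! i) \<in> perm_gset G Hs"
  unfolding perm_gset_def lcosets_set_def by auto

context group
begin

lemma l_coset_eq_iff:
  assumes "subgroup H G" "x \<in> carrier G" "y \<in> carrier G"
  shows "x <# H = y <# H \<longleftrightarrow> inv x \<otimes> y \<in> H"
proof
  assume eq: "x <# H = y <# H"
  have "y \<in> x <# H"
    using assms(1,3) unfolding eq by (force simp: l_coset_def intro: subgroup.one_closed)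
  then obtain h where "h \<in> H" "y = x \<otimes> h"
    unfolding l_coset_def by blast
  then show "inv x \<otimes> y \<in> H"
    using assms by (simp add: m_assoc[symmetric] subgroup.mem_carrier)
next
  assume "inv x \<otimes> y \<in> H"
  then have "y \<in> x <# H"
    using assms by (simp add: subgroup.lcos_module_rev)
  then show "x <# H = y <# H"
    using l_repr_independence assms(1,2) by blast
qed

lemma coset_act_closed:
  assumes "\<forall>H\<in>set Hs. subgroup H G" "g \<in> carrier G" "p \<in> perm_gset G Hs"
  shows "coset_act G g p \<in> perm_gset G Hs"
proof -
  obtain i h where p: "p = (i, h <# Hs ! i)" "i < length Hs" "h \<in> carrier G"
    using assms(3) by (rule perm_gsetE)
  then have "coset_act G g p = (i, (g \<otimes> h) <# Hs ! i)"
    using assms by (simp add: coset_act_def lcos_m_assoc subgroup.subset)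
  then show ?thesis
    using p assms(2) by (simp add: perm_gsetI)
qed

lemma coset_act_mult:
  assumes "\<forall>H\<in>set Hs. subgroup H G" "g \<in> carrier G" "g' \<in> carrier G"
    "p \<in> perm_gset G Hs"
  shows "coset_act G g (coset_act G g' p) = coset_act G (g \<otimes> g') p"
proof -
  obtain i h where "p = (i, h <# Hs ! i)" "i < length Hs" "h \<in> carrier G"
    using assms(4) by (rule perm_gsetE)
  then show ?thesis
    using assms by (simp add: coset_act_def lcos_m_assoc m_assoc subgroup.subset)
qed

lemma coset_act_one:
  assumes "\<forall>H\<in>set Hs. subgroup H G" "p \<in> perm_gset G Hs"
  shows "coset_act G \<one> p = p"
proof -
  obtain i h where "p = (i, h <# Hs ! i)" "i < length Hs" "h \<in> carrier G"
    using assms(2) by (rule perm_gsetE)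
  then show ?thesis
    using assms by (simp add: coset_act_def lcos_m_assoc subgroup.subset)
qed

lemma coset_act_inv_cancel:
  assumes "\<forall>H\<in>set Hs. subgroup H G" "g \<in> carrier G" "p \<in> perm_gset G Hs"
  shows "coset_act G (inv g) (coset_act G g p) = p"
    and "coset_act G g (coset_act G (inv g) p) = p"
  using assms by (simp_all add: coset_act_mult coset_act_closed coset_act_one)

lemma bij_betw_coset_act:
  assumes "\<forall>H\<in>set Hs. subgroup H G" "g \<in> carrier G"
  shows "bij_betw (coset_act G g) (perm_gset G Hs) (perm_gset G Hs)"
  by (rule bij_betw_byWitness[where f' = "coset_act G (inv g)"])
     (use assms coset_act_closed coset_act_inv_cancel in blast)+

end

definition kernel_map :: "('a, 'b) monoid_scheme \<Rightarrow> 'a set list \<Rightarrow> 'a set list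
    \<Rightarrow> (nat \<times> 'a set \<Rightarrow> nat \<times> 'a set \<Rightarrow> int)
    \<Rightarrow> (nat \<times> 'a set \<Rightarrow> int) \<Rightarrow> nat \<times> 'a set \<Rightarrow> int" where
  "kernel_map G Hs Ks K f =
     (\<lambda>y. if y \<in> perm_gset G Ks then \<Sum>x\<in>perm_gset G Hs. K y x * f x else 0)"

lemma kernel_map_in_perm_lattice: "kernel_map G Hs Ks K f \<in> perm_lattice G Ks"
  by (simp add: kernel_map_def perm_lattice_def)

lemma kernel_map_add:
  "kernel_map G Hs Ks K (\<lambda>x. f x + f' x) = (\<lambda>y. kernel_map G Hs Ks K f y + kernel_map G Hs Ks K f' y)"
  by (auto simp add: kernel_map_def distrib_left sum.distrib)

lemma kernel_map_inverse:
  assumes "finite (perm_gset G Hs)"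
    and LK: "\<forall>x\<in>perm_gset G Hs. \<forall>x'\<in>perm_gset G Hs.
      (\<Sum>y\<in>perm_gset G Ks. L x y * K y x') = (if x = x' then 1 else 0)"
    and f: "f \<in> perm_lattice G Hs"
  shows "kernel_map G Ks Hs L (kernel_map G Hs Ks K f) = f"
proof
  fix x
  let ?X = "perm_gset G Hs" and ?Y = "perm_gset G Ks"
  show "kernel_map G Ks Hs L (kernel_map G Hs Ks K f) x = f x"
  proof (cases "x \<in> ?X")
    case False
    then show ?thesis using f by (simp add: kernel_map_def perm_lattice_def del: split_paired_All)
  next
    case True
    have "kernel_map G Ks Hs L (kernel_map G Hs Ks K f) x
        = (\<Sum>y\<in>?Y. \<Sum>x'\<in>?X. L x y * K y x' * f x')"
      using True by (simp add: kernel_map_def sum_distrib_left mult.assoc)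
    also have "\<dots> = (\<Sum>x'\<in>?X. (\<Sum>y\<in>?Y. L x y * K y x') * f x')"
      by (subst sum.swap) (simp add: sum_distrib_right)
    also have "\<dots> = (\<Sum>x'\<in>?X. if x = x' then f x' else 0)"
      using LK True by (intro sum.cong) auto
    also have "\<dots> = f x"
      using True assms(1) by simp
    finally show ?thesis .
  qed
qed

context group
begin

lemma kernel_map_equivariant:
  assumes HS: "\<forall>H\<in>set Hs. subgroup H G" and KS: "\<forall>H\<in>set Ks. subgroup H G"
    and K: "\<forall>g\<in>carrier G. \<forall>y\<in>perm_gset G Ks. \<forall>x\<in>perm_gset G Hs.
      K (coset_act G g y) (coset_act G g x) = K y x"
    and g: "g \<in> carrier G"
  shows "kernel_map G Hs Ks K (perm_act G Hs g f) = perm_act G Ks g (kernel_map G Hs Ks K f)"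
proof
  fix y
  let ?X = "perm_gset G Hs" and ?act = "coset_act G"
  show "kernel_map G Hs Ks K (perm_act G Hs g f) y = perm_act G Ks g (kernel_map G Hs Ks K f) y"
  proof (cases "y \<in> perm_gset G Ks")
    case False
    then show ?thesis by (simp add: kernel_map_def perm_act_eq)
  next
    case True
    have y': "?act (inv g) y \<in> perm_gset G Ks"
      using KS g True by (simp add: coset_act_closed)
    have "kernel_map G Hs Ks K (perm_act G Hs g f) y = (\<Sum>x\<in>?X. K y x * f (?act (inv g) x))"
      using True by (simp add: kernel_map_def perm_act_eq)
    also have "\<dots> = (\<Sum>x\<in>?X. K y (?act g x) * f (?act (inv g) (?act g x)))"
      by (rule sum.reindex_bij_betw[OF bij_betw_coset_act[OF HS g], symmetric])
    also have "\<dots> = (\<Sum>x\<in>?X. K (?act (inv g) y) x * f x)"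
    proof (rule sum.cong[OF refl])
      fix x assume x: "x \<in> ?X"
      have "K (?act (inv g) y) (?act (inv g) (?act g x)) = K y (?act g x)"
        using K g True HS x by (simp add: coset_act_closed)
      then show "K y (?act g x) * f (?act (inv g) (?act g x)) = K (?act (inv g) y) x * f x"
        using HS g x by (simp add: coset_act_inv_cancel)
    qed
    also have "\<dots> = perm_act G Ks g (kernel_map G Hs Ks K f) y"
      using True y' by (simp add: kernel_map_def perm_act_eq)
    finally show ?thesis .
  qed
qed

lemma perm_lattice_iso_kernel:
  fixes K :: "nat \<times> 'a set \<Rightarrow> nat \<times> 'a set \<Rightarrow> int"
  assumes HS: "\<forall>H\<in>set Hs. subgroup H G" and KS: "\<forall>H\<in>set Ks. subgroup H G"
    and fin: "finite (perm_gset G Hs)" "finite (perm_gset G Ks)"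
    and K: "\<forall>g\<in>carrier G. \<forall>y\<in>perm_gset G Ks. \<forall>x\<in>perm_gset G Hs.
      K (coset_act G g y) (coset_act G g x) = K y x"
    and LK: "\<forall>x\<in>perm_gset G Hs. \<forall>x'\<in>perm_gset G Hs.
      (\<Sum>y\<in>perm_gset G Ks. L x y * K y x') = (if x = x' then 1 else 0)"
    and KL: "\<forall>y\<in>perm_gset G Ks. \<forall>y'\<in>perm_gset G Ks.
      (\<Sum>x\<in>perm_gset G Hs. K y x * L x y') = (if y = y' then 1 else 0)"
  shows "perm_lattice_iso G Hs Ks"
  unfolding perm_lattice_iso_def
proof (intro exI conjI ballI)
  show "bij_betw (kernel_map G Hs Ks K) (perm_lattice G Hs) (perm_lattice G Ks)"
    by (rule bij_betw_byWitness[where f' = "kernel_map G Ks Hs L"])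
       (use kernel_map_inverse[OF fin(1) LK] kernel_map_inverse[OF fin(2) KL]
          kernel_map_in_perm_lattice in blast)+
  show "kernel_map G Hs Ks K (\<lambda>x. f x + f' x)
      = (\<lambda>y. kernel_map G Hs Ks K f y + kernel_map G Hs Ks K f' y)" for f f'
    by (rule kernel_map_add)
  show "kernel_map G Hs Ks K (perm_act G Hs g f) = perm_act G Ks g (kernel_map G Hs Ks K f)"
    if "g \<in> carrier G" for g f
    using kernel_map_equivariant[OF HS KS K that] .
qed

lemma coset_act_invariant_generate:
  assumes HS: "\<forall>H\<in>set Hs. subgroup H G" and KS: "\<forall>H\<in>set Ks. subgroup H G"
    and S: "S \<subseteq> carrier G"
    and K: "\<forall>s\<in>S. \<forall>y\<in>perm_gset G Ks. \<forall>x\<in>perm_gset G Hs.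
      K (coset_act G s y) (coset_act G s x) = K y x"
    and g: "g \<in> generate G S"
  shows "\<forall>y\<in>perm_gset G Ks. \<forall>x\<in>perm_gset G Hs. K (coset_act G g y) (coset_act G g x) = K y x"
  using g
proof induction
  case one
  then show ?case using HS KS by (simp add: coset_act_one)
next
  case (incl s)
  then show ?case using K by blast
next
  case (inv s)
  show ?case
  proof (intro ballI)
    fix y x assume "y \<in> perm_gset G Ks" "x \<in> perm_gset G Hs"
    moreover have "s \<in> carrier G" using inv S by blast
    ultimately show "K (coset_act G (inv s) y) (coset_act G (inv s) x) = K y x"
      using K inv HS KS by (metis coset_act_closed coset_act_inv_cancel(2) inv_closed)
  qed
next
  case (eng g h)
  have "g \<in> carrier G" "h \<in> carrier G"
    using eng.hyps generate_incl[OF S] by blast+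
  show ?case
  proof (intro ballI)
    fix y x assume "y \<in> perm_gset G Ks" "x \<in> perm_gset G Hs"
    with \<open>g \<in> carrier G\<close> \<open>h \<in> carrier G\<close> show
      "K (coset_act G (g \<otimes> h) y) (coset_act G (g \<otimes> h) x) = K y x"
      using eng.IH HS KS by (simp add: coset_act_mult[symmetric] coset_act_closed)
  qed
qed

end

section \<open>Coset enumerations and matrices\<close>

locale coset_enumeration = group G for G (structure) +
  fixes Hs :: "'a set list" and n :: nat
    and b :: "nat \<Rightarrow> nat" and r :: "nat \<Rightarrow> 'a" and c :: "nat \<Rightarrow> 'a \<Rightarrow> nat"
  assumes subgroups: "\<forall>H\<in>set Hs. subgroup H G"
    and block_less: "k < n \<Longrightarrow> b k < length Hs"
    and rep_carrier: "k < n \<Longrightarrow> r k \<in> carrier G"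
    and reps_distinct: "\<lbrakk>k < n; l < n; b k = b l; inv (r k) \<otimes> r l \<in> Hs ! b k\<rbrakk> \<Longrightarrow> k = l"
    and index_less: "\<lbrakk>i < length Hs; h \<in> carrier G\<rbrakk> \<Longrightarrow> c i h < n"
    and index_block: "\<lbrakk>i < length Hs; h \<in> carrier G\<rbrakk> \<Longrightarrow> b (c i h) = i"
    and index_rep: "\<lbrakk>i < length Hs; h \<in> carrier G\<rbrakk> \<Longrightarrow> inv (r (c i h)) \<otimes> h \<in> Hs ! i"
begin

definition point :: "nat \<Rightarrow> nat \<times> 'a set" where
  "point k = (b k, r k <# Hs ! b k)"

lemma subgroup_nth: "i < length Hs \<Longrightarrow> subgroup (Hs ! i) G"
  using subgroups by simp

lemma point_index:
  assumes "i < length Hs" "h \<in> carrier G"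
  shows "point (c i h) = (i, h <# Hs ! i)"
  using assms subgroup_nth index_less index_block index_rep rep_carrier
  by (simp add: point_def l_coset_eq_iff)

lemma bij_betw_point: "bij_betw point {..<n} (perm_gset G Hs)"
proof (rule bij_betw_imageI)
  show "inj_on point {..<n}"
  proof (rule inj_onI)
    fix k l assume kl: "k \<in> {..<n}" "l \<in> {..<n}" and "point k = point l"
    then have same_block: "b k = b l" and "r k <# Hs ! b l = r l <# Hs ! b l"
      unfolding point_def by (metis prod.inject)+
    then have "inv (r k) \<otimes> r l \<in> Hs ! b l"
      using kl by (simp add: l_coset_eq_iff subgroup_nth block_less rep_carrier)
    then show "k = l"
      using kl same_block reps_distinct by simp
  qed
  show "point ` {..<n} = perm_gset G Hs"
  proof
    show "point ` {..<n} \<subseteq> perm_gset G Hs"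
      unfolding point_def using block_less rep_carrier by (auto intro: perm_gsetI)
    show "perm_gset G Hs \<subseteq> point ` {..<n}"
    proof
      fix p assume "p \<in> perm_gset G Hs"
      then obtain i h where "p = (i, h <# Hs ! i)" "i < length Hs" "h \<in> carrier G"
        by (rule perm_gsetE)
      then have "p = point (c i h)" "c i h < n"
        by (simp_all add: point_index index_less)
      then show "p \<in> point ` {..<n}" by blast
    qed
  qed
qed

lemma coset_act_point:
  assumes "g \<in> carrier G" "k < n"
  shows "coset_act G g (point k) = point (c (b k) (g \<otimes> r k))"
proof -
  have "coset_act G g (point k) = (b k, (g \<otimes> r k) <# Hs ! b k)"
    using assms subgroup_nth block_less rep_carrier
    by (simp add: point_def coset_act_def lcos_m_assoc subgroup.subset)
  then show ?thesis
    using assms block_less rep_carrier by (simp add: point_index)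
qed

end

definition matrix_kernel :: "(nat \<Rightarrow> 'p) \<Rightarrow> nat \<Rightarrow> (nat \<Rightarrow> 'q) \<Rightarrow> nat
    \<Rightarrow> (nat \<Rightarrow> nat \<Rightarrow> int) \<Rightarrow> 'p \<Rightarrow> 'q \<Rightarrow> int" where
  "matrix_kernel p n q m M y x = M (inv_into {..<n} p y) (inv_into {..<m} q x)"

lemma matrix_kernel_inverse:
  fixes A B :: "nat \<Rightarrow> nat \<Rightarrow> int"
  assumes p: "bij_betw p {..<n} P" and q: "bij_betw q {..<m} Q"
    and AB: "\<And>l l'. l < n \<Longrightarrow> l' < n \<Longrightarrow> (\<Sum>k<m. A l k * B k l') = (if l = l' then 1 else 0)"
  shows "\<forall>x\<in>P. \<forall>x'\<in>P. (\<Sum>y\<in>Q. matrix_kernel p n q m A x y * matrix_kernel q m p n B y x')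
    = (if x = x' then 1 else 0)"
proof (intro ballI)
  fix x x' assume x: "x \<in> P" "x' \<in> P"
  let ?i = "inv_into {..<n} p" and ?j = "inv_into {..<m} q"
  have i: "bij_betw ?i P {..<n}"
    using p by (rule bij_betw_inv_into)
  have "(\<Sum>y\<in>Q. matrix_kernel p n q m A x y * matrix_kernel q m p n B y x')
      = (\<Sum>k<m. A (?i x) k * B k (?i x'))"
    using q by (simp add: matrix_kernel_def sum.reindex_bij_betw[OF q, symmetric]
        bij_betw_inv_into_left)
  also have "\<dots> = (if ?i x = ?i x' then 1 else 0)"
    using AB bij_betw_apply[OF i] x by simp
  also have "\<dots> = (if x = x' then 1 else 0)"
    using i x by (auto dest: bij_betw_imp_inj_on simp: inj_on_eq_iff)
  finally show "(\<Sum>y\<in>Q. matrix_kernel p n q m A x y * matrix_kernel q m p n B y x')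
      = (if x = x' then 1 else 0)" .
qed

context group
begin

lemma matrix_kernel_coset_act:
  fixes M :: "nat \<Rightarrow> nat \<Rightarrow> int"
  assumes X: "coset_enumeration G Hs n bX rX cX" and Y: "coset_enumeration G Ks m bY rY cY"
    and s: "s \<in> carrier G"
    and M: "\<And>k l. \<lbrakk>k < m; l < n\<rbrakk> \<Longrightarrow> M (cY (bY k) (s \<otimes> rY k)) (cX (bX l) (s \<otimes> rX l)) = M k l"
    and y: "y \<in> perm_gset G Ks" and x: "x \<in> perm_gset G Hs"
  defines "K \<equiv> matrix_kernel (coset_enumeration.point G Ks bY rY) m
      (coset_enumeration.point G Hs bX rX) n M"
  shows "K (coset_act G s y) (coset_act G s x) = K y x"
proof -
  interpret X: coset_enumeration G Hs n bX rX cX by (fact X)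
  interpret Y: coset_enumeration G Ks m bY rY cY by (fact Y)
  obtain k l where kl: "k < m" "y = Y.point k" "l < n" "x = X.point l"
    using x y X.bij_betw_point Y.bij_betw_point unfolding bij_betw_def by blast
  have "cY (bY k) (s \<otimes> rY k) < m" "cX (bX l) (s \<otimes> rX l) < n"
    using kl s by (simp_all add: X.index_less Y.index_less X.block_less Y.block_less
        X.rep_carrier Y.rep_carrier)
  then show ?thesis
    using kl s M X.bij_betw_point Y.bij_betw_point
    by (simp add: K_def matrix_kernel_def X.coset_act_point Y.coset_act_point
        bij_betw_inv_into_left)
qed

lemma perm_lattice_iso_matrix:
  fixes M N :: "nat \<Rightarrow> nat \<Rightarrow> int"
  assumes X: "coset_enumeration G Hs n bX rX cX" and Y: "coset_enumeration G Ks m bY rY cY"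
    and S: "generate G S = carrier G"
    and M: "\<And>s k l. \<lbrakk>s \<in> S; k < m; l < n\<rbrakk>
      \<Longrightarrow> M (cY (bY k) (s \<otimes> rY k)) (cX (bX l) (s \<otimes> rX l)) = M k l"
    and NM: "\<And>l l'. l < n \<Longrightarrow> l' < n \<Longrightarrow> (\<Sum>k<m. N l k * M k l') = (if l = l' then 1 else 0)"
    and MN: "\<And>k k'. k < m \<Longrightarrow> k' < m \<Longrightarrow> (\<Sum>l<n. M k l * N l k') = (if k = k' then 1 else 0)"
  shows "perm_lattice_iso G Hs Ks"
proof -
  interpret X: coset_enumeration G Hs n bX rX cX by (fact X)
  interpret Y: coset_enumeration G Ks m bY rY cY by (fact Y)
  let ?K = "matrix_kernel Y.point m X.point n M" and ?L = "matrix_kernel X.point n Y.point m N"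
  have S_carrier: "S \<subseteq> carrier G"
    using S generate.incl[of _ S G] by blast
  have "\<forall>s\<in>S. \<forall>y\<in>perm_gset G Ks. \<forall>x\<in>perm_gset G Hs.
      ?K (coset_act G s y) (coset_act G s x) = ?K y x"
    using matrix_kernel_coset_act[OF X Y] M S_carrier by blast
  then have K: "\<forall>g\<in>carrier G. \<forall>y\<in>perm_gset G Ks. \<forall>x\<in>perm_gset G Hs.
      ?K (coset_act G g y) (coset_act G g x) = ?K y x"
    using coset_act_invariant_generate[OF X.subgroups Y.subgroups S_carrier] S by blast
  show ?thesis
    using perm_lattice_iso_kernel[OF X.subgroups Y.subgroups _ _ K]
      X.bij_betw_point Y.bij_betw_point bij_betw_finite
      matrix_kernel_inverse[OF X.bij_betw_point Y.bij_betw_point NM]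
      matrix_kernel_inverse[OF Y.bij_betw_point X.bij_betw_point MN]
    by blast
qed

end

section \<open>The dihedral group of order 12\<close>

lemma mult_D6: "x \<otimes>\<^bsub>D6\<^esub> y = d6_mult x y"
  by (simp add: D6_def)

lemma one_D6: "\<one>\<^bsub>D6\<^esub> = (0, False)"
  by (simp add: D6_def)

definition d6_elems :: "(nat \<times> bool) list" where
  "d6_elems = [(a, e). e \<leftarrow> [False, True], a \<leftarrow> [0..<6]]"

definition d6_index :: "nat \<times> bool \<Rightarrow> nat" where
  "d6_index x = (if snd x then fst x + 6 else fst x)"

definition d6_inv :: "nat \<times> bool \<Rightarrow> nat \<times> bool" where
  "d6_inv x = (if snd x then x else ((6 - fst x) mod 6, False))"

lemma carrier_D6: "carrier D6 = set d6_elems"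
proof -
  have "(UNIV :: bool set) = {False, True}" by auto
  then show ?thesis by (auto simp: D6_def d6_elems_def)
qed

lemma d6_group_table:
  "list_all (\<lambda>x. d6_mult (0, False) x = x \<and> d6_inv x \<in> set d6_elems \<and> d6_mult (d6_inv x) x = (0, False)
     \<and> list_all (\<lambda>y. d6_mult x y \<in> set d6_elems
       \<and> list_all (\<lambda>z. d6_mult (d6_mult x y) z = d6_mult x (d6_mult y z)) d6_elems) d6_elems) d6_elems"
  by code_simp

lemma group_D6: "group D6"
proof (rule groupI)
  show "\<one>\<^bsub>D6\<^esub> \<in> carrier D6"
    by (simp add: D6_def)
qed (use d6_group_table in \<open>auto simp: carrier_D6 mult_D6 one_D6 list_all_iff\<close>)

lemma inv_D6: "x \<in> carrier D6 \<Longrightarrow> inv\<^bsub>D6\<^esub> x = d6_inv x"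
  using d6_group_table group.inv_equality[OF group_D6, of "d6_inv x" x]
  by (simp add: carrier_D6 mult_D6 one_D6 list_all_iff)

lemma d6_sigma_pow: "d6_sigma [^]\<^bsub>D6\<^esub> (k::nat) = (k mod 6, False)"
proof (induction k)
  case 0
  then show ?case by (simp add: one_D6)
next
  case (Suc k)
  then show ?case
    by (simp add: monoid.nat_pow_Suc[OF group.is_monoid[OF group_D6]] mult_D6 d6_mult_def
        d6_sigma_def mod_Suc_eq)
qed

lemma d6_sigma_mult_tau: "d6_sigma \<otimes>\<^bsub>D6\<^esub> d6_tau = (1, True)"
  by (simp add: mult_D6 d6_mult_def d6_sigma_def d6_tau_def)

definition d6_closed :: "(nat \<times> bool) list \<Rightarrow> bool" where
  "d6_closed l \<longleftrightarrow> l \<noteq> [] \<and> list_all (\<lambda>x. x \<in> set d6_elems \<and> d6_inv x \<in> set l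
     \<and> list_all (\<lambda>y. d6_mult x y \<in> set l) l) l"

lemma subgroup_D6_if_closed:
  assumes "d6_closed l"
  shows "subgroup (set l) D6"
proof (rule group.subgroupI[OF group_D6])
  show "set l \<subseteq> carrier D6" "set l \<noteq> {}"
    using assms by (auto simp: d6_closed_def carrier_D6 list_all_iff)
  then show "\<And>x. x \<in> set l \<Longrightarrow> inv\<^bsub>D6\<^esub> x \<in> set l"
    using assms by (auto simp: d6_closed_def inv_D6 list_all_iff)
  show "\<And>x y. x \<in> set l \<Longrightarrow> y \<in> set l \<Longrightarrow> x \<otimes>\<^bsub>D6\<^esub> y \<in> set l"
    using assms by (simp add: d6_closed_def mult_D6 list_all_iff)
qed

definition d6_products :: "(nat \<times> bool) list \<Rightarrow> (nat \<times> bool) list" where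
  "d6_products A = remdups (A @ [d6_mult x y. x \<leftarrow> A, y \<leftarrow> A])"

lemma d6_products_generate:
  assumes "set A \<subseteq> generate D6 S"
  shows "set (d6_products A) \<subseteq> generate D6 S"
proof -
  have "d6_mult x y \<in> generate D6 S" if "x \<in> set A" "y \<in> set A" for x y
    using assms that generate.eng[of x D6 S y] by (auto simp: mult_D6)
  then show ?thesis
    using assms by (auto simp: d6_products_def simp del: split_paired_All)
qed

definition d6_generates :: "(nat \<times> bool) list \<Rightarrow> (nat \<times> bool) list \<Rightarrow> bool" where
  "d6_generates S l \<longleftrightarrow> d6_closed l \<and> set S \<subseteq> set l
     \<and> set l \<subseteq> set ((d6_products ^^ 3) ((0, False) # S))"

lemma generate_D6_eq:
  assumes "d6_generates S l"
  shows "generate D6 (set S) = set l"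
proof
  show "generate D6 (set S) \<subseteq> set l"
    using group.generate_subgroup_incl[OF group_D6] subgroup_D6_if_closed assms
    by (auto simp: d6_generates_def)
  have "set ((0, False) # S) \<subseteq> generate D6 (set S)"
    using generate.one[of D6 "set S"] generate.incl[of _ "set S" D6] by (auto simp: one_D6)
  then have "set ((d6_products ^^ k) ((0, False) # S)) \<subseteq> generate D6 (set S)" for k
    by (induction k) (simp_all add: d6_products_generate)
  then show "set l \<subseteq> generate D6 (set S)"
    using assms by (auto simp: d6_generates_def)
qed

definition "d6_C2_1 = [(0, False), (3, False)]"
definition "d6_C2_2 = [(0, False), (0, True)]"
definition "d6_C2_3 = [(0, False), (1, True)]"
definition "d6_C3 = [(0, False), (2, False), (4, False)]"
definition "d6_V4 = [(0, False), (3, False), (0, True), (3, True)]"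
definition "d6_C6 = [(0, False), (1, False), (2, False), (3, False), (4, False), (5, False)]"
definition "d6_S3_1 = [(0, False), (2, False), (4, False), (0, True), (2, True), (4, True)]"
definition "d6_S3_2 = [(0, False), (2, False), (4, False), (1, True), (3, True), (5, True)]"

lemma d6_generators:
  "d6_generates [(1, False), (0, True)] d6_elems"
  "d6_generates [(3, False)] d6_C2_1"
  "d6_generates [(0, True)] d6_C2_2"
  "d6_generates [(1, True)] d6_C2_3"
  "d6_generates [(2, False)] d6_C3"
  "d6_generates [(3, False), (0, True)] d6_V4"
  "d6_generates [(1, False)] d6_C6"
  "d6_generates [(2, False), (0, True)] d6_S3_1"
  "d6_generates [(2, False), (1, True)] d6_S3_2"
  by code_simp+

lemma generate_D6_sigma_tau: "generate D6 {d6_sigma, d6_tau} = carrier D6"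
  using generate_D6_eq[OF d6_generators(1)] by (simp add: carrier_D6 d6_sigma_def d6_tau_def)

definition d6_enumeration_ok ::
    "(nat \<times> bool) list list \<Rightarrow> nat list \<Rightarrow> (nat \<times> bool) list \<Rightarrow> nat list list \<Rightarrow> bool" where
  "d6_enumeration_ok Hl bs rs tab \<longleftrightarrow> list_all d6_closed Hl \<and> length rs = length bs
    \<and> list_all (\<lambda>k. bs ! k < length Hl \<and> rs ! k \<in> set d6_elems
        \<and> list_all (\<lambda>l. bs ! k = bs ! l \<and> d6_mult (d6_inv (rs ! k)) (rs ! l) \<in> set (Hl ! (bs ! k))
            \<longrightarrow> k = l) [0..<length bs]) [0..<length bs]
    \<and> list_all (\<lambda>i. list_all (\<lambda>h. let k = tab ! i ! d6_index h in
        k < length bs \<and> bs ! k = i \<and> d6_mult (d6_inv (rs ! k)) h \<in> set (Hl ! i)) d6_elems)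
      [0..<length Hl]"

lemma coset_enumeration_D6:
  assumes "d6_enumeration_ok Hl bs rs tab"
  shows "coset_enumeration D6 (map set Hl) (length bs) ((!) bs) ((!) rs) (\<lambda>i h. tab ! i ! d6_index h)"
proof (rule coset_enumeration.intro[OF group_D6], unfold_locales)
  show "\<forall>H\<in>set (map set Hl). subgroup H D6"
    using assms subgroup_D6_if_closed by (auto simp: d6_enumeration_ok_def list_all_iff)
qed (use assms in \<open>auto simp: d6_enumeration_ok_def list_all_iff Let_def carrier_D6 inv_D6 mult_D6\<close>)

section \<open>The certificate\<close>

definition lhs_subgroups :: "(nat \<times> bool) list list" where
  "lhs_subgroups = [[(0, False)], d6_V4, d6_V4, d6_C6, d6_S3_1, d6_S3_2]"

definition rhs_subgroups :: "(nat \<times> bool) list list" where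
  "rhs_subgroups = [d6_C2_1, d6_C2_2, d6_C2_3, d6_C3, d6_elems, d6_elems]"

(* Point k of the left-hand G-set is the coset (lhs_rep ! k) H, where H = lhs_subgroups ! i and
   i = lhs_block ! k; entry (i, d6_index h) of lhs_coset_table is the number of the point h H.
   The same for the right-hand side. *)
definition lhs_block :: "nat list" where
  "lhs_block = [0, 0, 0, 0, 0, 0, 0, 0, 0, 0, 0, 0, 1, 1, 1, 2, 2, 2, 3, 3, 4, 4, 5, 5]"

definition lhs_rep :: "(nat \<times> bool) list" where
  "lhs_rep =
    [(0, False), (1, False), (2, False), (3, False), (4, False), (5, False),
     (0, True), (1, True), (2, True), (3, True), (4, True), (5, True),
     (0, False), (1, False), (2, False), (0, False), (1, False), (2, False),
     (0, False), (0, True), (0, False), (1, False), (0, False), (1, False)]"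

definition lhs_coset_table :: "nat list list" where
  "lhs_coset_table =
    [[0, 1, 2, 3, 4, 5, 6, 7, 8, 9, 10, 11],
     [12, 13, 14, 12, 13, 14, 12, 13, 14, 12, 13, 14],
     [15, 16, 17, 15, 16, 17, 15, 16, 17, 15, 16, 17],
     [18, 18, 18, 18, 18, 18, 19, 19, 19, 19, 19, 19],
     [20, 21, 20, 21, 20, 21, 20, 21, 20, 21, 20, 21],
     [22, 23, 22, 23, 22, 23, 23, 22, 23, 22, 23, 22]]"

definition rhs_block :: "nat list" where
  "rhs_block = [0, 0, 0, 0, 0, 0, 1, 1, 1, 1, 1, 1, 2, 2, 2, 2, 2, 2, 3, 3, 3, 3, 4, 5]"

definition rhs_rep :: "(nat \<times> bool) list" where
  "rhs_rep =
    [(0, False), (1, False), (2, False), (0, True), (1, True), (2, True),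
     (0, False), (1, False), (2, False), (3, False), (4, False), (5, False),
     (0, False), (1, False), (2, False), (3, False), (4, False), (5, False),
     (0, False), (1, False), (0, True), (1, True), (0, False), (0, False)]"

definition rhs_coset_table :: "nat list list" where
  "rhs_coset_table =
    [[0, 1, 2, 0, 1, 2, 3, 4, 5, 3, 4, 5],
     [6, 7, 8, 9, 10, 11, 6, 7, 8, 9, 10, 11],
     [12, 13, 14, 15, 16, 17, 17, 12, 13, 14, 15, 16],
     [18, 19, 18, 19, 18, 19, 20, 21, 20, 21, 20, 21],
     [22, 22, 22, 22, 22, 22, 22, 22, 22, 22, 22, 22],
     [23, 23, 23, 23, 23, 23, 23, 23, 23, 23, 23, 23]]"

(* Found by computer; rows are indexed by the points of the right-hand G-set, columns by those of
   the left-hand one. *)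
definition iso_matrix :: "int list list" where
  "iso_matrix =
    [[0, 0, -1, 0, 0, -1, 0, -1, -1, 0, -1, -1, 0, 1, 0, 0, 0, 1, 1, 0, 0, 0, 0, 0],
     [-1, 0, 0, -1, 0, 0, -1, 0, -1, -1, 0, -1, 0, 0, 1, 1, 0, 0, 1, 0, 0, 0, 0, 0],
     [0, -1, 0, 0, -1, 0, -1, -1, 0, -1, -1, 0, 1, 0, 0, 0, 1, 0, 1, 0, 0, 0, 0, 0],
     [0, -1, -1, 0, -1, -1, 0, -1, 0, 0, -1, 0, 0, 0, 1, 0, 1, 0, 0, 1, 0, 0, 0, 0],
     [-1, 0, -1, -1, 0, -1, 0, 0, -1, 0, 0, -1, 1, 0, 0, 0, 0, 1, 0, 1, 0, 0, 0, 0],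
     [-1, -1, 0, -1, -1, 0, -1, 0, 0, -1, 0, 0, 0, 1, 0, 1, 0, 0, 0, 1, 0, 0, 0, 0],
     [1, 1, 1, 0, 1, 1, 1, 1, 1, 0, 1, 1, 1, 0, 0, 1, 0, 0, -1, -1, 0, -1, 1, 1],
     [1, 1, 1, 1, 0, 1, 1, 1, 1, 1, 0, 1, 0, 1, 0, 0, 1, 0, -1, -1, -1, 0, 1, 1],
     [1, 1, 1, 1, 1, 0, 1, 1, 1, 1, 1, 0, 0, 0, 1, 0, 0, 1, -1, -1, 0, -1, 1, 1],
     [0, 1, 1, 1, 1, 1, 0, 1, 1, 1, 1, 1, 1, 0, 0, 1, 0, 0, -1, -1, -1, 0, 1, 1],
     [1, 0, 1, 1, 1, 1, 1, 0, 1, 1, 1, 1, 0, 1, 0, 0, 1, 0, -1, -1, 0, -1, 1, 1],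
     [1, 1, 0, 1, 1, 1, 1, 1, 0, 1, 1, 1, 0, 0, 1, 0, 0, 1, -1, -1, -1, 0, 1, 1],
     [1, 1, 0, -1, 0, 0, 1, 1, 0, 0, -1, 0, 0, 0, 1, 0, 0, -1, 0, 0, -1, -1, -1, 0],
     [0, 1, 1, 0, -1, 0, 0, 1, 1, 0, 0, -1, 1, 0, 0, -1, 0, 0, 0, 0, -1, -1, 0, -1],
     [0, 0, 1, 1, 0, -1, -1, 0, 1, 1, 0, 0, 0, 1, 0, 0, -1, 0, 0, 0, -1, -1, -1, 0],
     [-1, 0, 0, 1, 1, 0, 0, -1, 0, 1, 1, 0, 0, 0, 1, 0, 0, -1, 0, 0, -1, -1, 0, -1],
     [0, -1, 0, 0, 1, 1, 0, 0, -1, 0, 1, 1, 1, 0, 0, -1, 0, 0, 0, 0, -1, -1, -1, 0],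
     [1, 0, -1, 0, 0, 1, 1, 0, 0, -1, 0, 1, 0, 1, 0, 0, -1, 0, 0, 0, -1, -1, 0, -1],
     [0, 0, 0, 0, 0, 0, 1, 0, 1, 0, 1, 0, 0, 0, 0, 0, 0, 0, -1, 1, 1, 0, 1, 0],
     [0, 0, 0, 0, 0, 0, 0, 1, 0, 1, 0, 1, 0, 0, 0, 0, 0, 0, -1, 1, 0, 1, 0, 1],
     [1, 0, 1, 0, 1, 0, 0, 0, 0, 0, 0, 0, 0, 0, 0, 0, 0, 0, 1, -1, 1, 0, 0, 1],
     [0, 1, 0, 1, 0, 1, 0, 0, 0, 0, 0, 0, 0, 0, 0, 0, 0, 0, 1, -1, 0, 1, 1, 0],
     [0, 0, 0, 0, 0, 0, 0, 0, 0, 0, 0, 0, 0, 0, 0, -1, -1, -1, 1, 1, 0, 0, 0, 0],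
     [1, 1, 1, 1, 1, 1, 1, 1, 1, 1, 1, 1, 1, 1, 1, -1, -1, -1, 1, 1, 0, 0, 1, 1]]"

definition iso_matrix_inv :: "int list list" where
  "iso_matrix_inv =
    [[-1, 1, -4, 1, -3, -4, 1, 0, -2, 1, 1, 0, -6, -3, -4, -6, -4, -4, -13, -13, -13, -14, -6, 12],
     [-4, -1, 1, -4, 1, -3, 0, 1, 0, -2, 1, 1, -4, -6, -3, -4, -6, -4, -13, -13, -14, -13, -6, 12],
     [1, -4, -1, -3, -4, 1, 1, 0, 1, 0, -2, 1, -4, -4, -6, -3, -4, -6, -13, -13, -13, -14, -6, 12],
     [-1, 1, -4, 1, -3, -4, 1, 1, 0, 1, 0, -2, -6, -4, -4, -6, -3, -4, -13, -13, -14, -13, -6, 12],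
     [-4, -1, 1, -4, 1, -3, -2, 1, 1, 0, 1, 0, -4, -6, -4, -4, -6, -3, -13, -13, -13, -14, -6, 12],
     [1, -4, -1, -3, -4, 1, 0, -2, 1, 1, 0, 1, -3, -4, -6, -4, -4, -6, -13, -13, -14, -13, -6, 12],
     [1, -4, -3, -1, -4, 1, 1, 0, 1, 1, -2, 0, -4, -4, -6, -4, -3, -6, -13, -14, -13, -13, -6, 12],
     [-3, 1, -4, 1, -1, -4, 0, 1, 0, 1, 1, -2, -6, -4, -4, -6, -4, -3, -14, -13, -13, -13, -6, 12],
     [-4, -3, 1, -4, 1, -1, -2, 0, 1, 0, 1, 1, -3, -6, -4, -4, -6, -4, -13, -14, -13, -13, -6, 12],
     [1, -4, -3, -1, -4, 1, 1, -2, 0, 1, 0, 1, -4, -3, -6, -4, -4, -6, -14, -13, -13, -13, -6, 12],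
     [-3, 1, -4, 1, -1, -4, 1, 1, -2, 0, 1, 0, -6, -4, -3, -6, -4, -4, -13, -14, -13, -13, -6, 12],
     [-4, -3, 1, -4, 1, -1, 0, 1, 1, -2, 0, 1, -4, -6, -4, -3, -6, -4, -14, -13, -13, -13, -6, 12],
     [7, 6, 5, 7, 5, 6, 0, -1, -1, 0, -1, -1, 16, 17, 16, 16, 17, 16, 48, 48, 48, 48, 21, -43],
     [5, 7, 6, 6, 7, 5, -1, 0, -1, -1, 0, -1, 16, 16, 17, 16, 16, 17, 48, 48, 48, 48, 21, -43],
     [6, 5, 7, 5, 6, 7, -1, -1, 0, -1, -1, 0, 17, 16, 16, 17, 16, 16, 48, 48, 48, 48, 21, -43],
     [-4, -6, -9, -4, -9, -6, 2, 0, 0, 2, 0, 0, -18, -16, -18, -18, -16, -18, -51, -51, -51, -51, -23, 46],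
     [-9, -4, -6, -6, -4, -9, 0, 2, 0, 0, 2, 0, -18, -18, -16, -18, -18, -16, -51, -51, -51, -51, -23, 46],
     [-6, -9, -4, -9, -6, -4, 0, 0, 2, 0, 0, 2, -16, -18, -18, -16, -18, -18, -51, -51, -51, -51, -23, 46],
     [-10, -10, -10, -9, -9, -9, 1, 1, 1, 1, 1, 1, -26, -26, -26, -26, -26, -26, -77, -77, -76, -76, -34, 69],
     [-9, -9, -9, -10, -10, -10, 1, 1, 1, 1, 1, 1, -26, -26, -26, -26, -26, -26, -76, -76, -77, -77, -34, 69],
     [4, 4, 4, 4, 4, 4, 0, -1, 0, -1, 0, -1, 11, 11, 11, 11, 11, 11, 32, 33, 32, 33, 14, -29],
     [4, 4, 4, 4, 4, 4, -1, 0, -1, 0, -1, 0, 11, 11, 11, 11, 11, 11, 33, 32, 33, 32, 14, -29],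
     [1, 1, 1, 1, 1, 1, 0, 0, 0, 0, 0, 0, 2, 3, 2, 3, 2, 3, 7, 8, 8, 7, 4, -7],
     [1, 1, 1, 1, 1, 1, 0, 0, 0, 0, 0, 0, 3, 2, 3, 2, 3, 2, 8, 7, 7, 8, 4, -7]]"

lemma lhs_enumeration: "d6_enumeration_ok lhs_subgroups lhs_block lhs_rep lhs_coset_table"
  by code_simp

lemma rhs_enumeration: "d6_enumeration_ok rhs_subgroups rhs_block rhs_rep rhs_coset_table"
  by code_simp

lemma iso_matrix_invariant:
  "list_all (\<lambda>s. list_all (\<lambda>k. list_all (\<lambda>l.
      iso_matrix ! (rhs_coset_table ! (rhs_block ! k) ! d6_index (d6_mult s (rhs_rep ! k)))
        ! (lhs_coset_table ! (lhs_block ! l) ! d6_index (d6_mult s (lhs_rep ! l)))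
      = iso_matrix ! k ! l) [0..<24]) [0..<24]) [d6_sigma, d6_tau]"
  by code_simp

lemma iso_matrix_inverse:
  "list_all (\<lambda>l. list_all (\<lambda>l'. (\<Sum>k\<leftarrow>[0..<24]. iso_matrix_inv ! l ! k * iso_matrix ! k ! l')
      = (if l = l' then 1 else 0)) [0..<24]) [0..<24]"
  "list_all (\<lambda>k. list_all (\<lambda>k'. (\<Sum>l\<leftarrow>[0..<24]. iso_matrix ! k ! l * iso_matrix_inv ! l ! k')
      = (if k = k' then 1 else 0)) [0..<24]) [0..<24]"
  by code_simp+

lemma perm_lattice_iso_lhs_rhs: "perm_lattice_iso D6 (map set lhs_subgroups) (map set rhs_subgroups)"
proof -
  have lengths: "length lhs_block = 24" "length rhs_block = 24"
    by (simp_all add: lhs_block_def rhs_block_def)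
  show ?thesis
  proof (rule group.perm_lattice_iso_matrix[OF group_D6 coset_enumeration_D6[OF lhs_enumeration]
        coset_enumeration_D6[OF rhs_enumeration] generate_D6_sigma_tau,
        where M = "\<lambda>k l. iso_matrix ! k ! l" and N = "\<lambda>l k. iso_matrix_inv ! l ! k"])
    show "\<And>s k l. \<lbrakk>s \<in> {d6_sigma, d6_tau}; k < length rhs_block; l < length lhs_block\<rbrakk> \<Longrightarrow>
        iso_matrix ! (rhs_coset_table ! (rhs_block ! k) ! d6_index (s \<otimes>\<^bsub>D6\<^esub> rhs_rep ! k))
          ! (lhs_coset_table ! (lhs_block ! l) ! d6_index (s \<otimes>\<^bsub>D6\<^esub> lhs_rep ! l))
        = iso_matrix ! k ! l"
      using iso_matrix_invariant by (auto simp: lengths list_all_iff mult_D6)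
  qed (use iso_matrix_inverse in \<open>simp_all add: lengths list_all_iff
      interv_sum_list_conv_sum_set_nat atLeast0LessThan\<close>)
qed

theorem proposition6p7:
  shows "perm_lattice_iso D6
     [ {\<one>\<^bsub>D6\<^esub>},
       generate D6 {d6_sigma [^]\<^bsub>D6\<^esub> (3::nat), d6_tau},
       generate D6 {d6_sigma [^]\<^bsub>D6\<^esub> (3::nat), d6_tau},
       generate D6 {d6_sigma},
       generate D6 {d6_sigma [^]\<^bsub>D6\<^esub> (2::nat), d6_tau},
       generate D6 {d6_sigma [^]\<^bsub>D6\<^esub> (2::nat), d6_sigma \<otimes>\<^bsub>D6\<^esub> d6_tau} ]
     [ generate D6 {d6_sigma [^]\<^bsub>D6\<^esub> (3::nat)},
       generate D6 {d6_tau},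
       generate D6 {d6_sigma \<otimes>\<^bsub>D6\<^esub> d6_tau},
       generate D6 {d6_sigma [^]\<^bsub>D6\<^esub> (2::nat)},
       carrier D6,
       carrier D6 ]"
  using perm_lattice_iso_lhs_rhs d6_generators[THEN generate_D6_eq]
  unfolding d6_sigma_pow d6_sigma_mult_tau
  by (simp add: lhs_subgroups_def rhs_subgroups_def one_D6 carrier_D6 d6_sigma_def d6_tau_def)

end
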